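(* Let $I=(G,T,k)$ be a Node Multiway Cut instance with $s=|T|\ge 2$ satisfying: (R1) no two terminals are adjacent and $p(I)\ge 0$; (R2) no vertex of $V\setminus T$ is adjacent to two distinct terminals; (R3) for every terminal $t$ and every neighbour $w\in V\setminus T$ of $t$, the optimum of the LP-relaxation of $I$ with the additional constraint $d_w=0$ is strictly larger than $LP(I)$. If $q(I)\ge \frac{s-2}{s-1}k$ or $q(I)\le 2p(I)$, then $I$ is a YES-instance.
   Context: A Node Multiway Cut instance $I=(G,T,k)$ consists of a simple undirected graph $G=(V,E)$, a set $T\subseteq V$ of terminals and an integer $k$; it is a YES-instance iff there is a set $X\subseteq V\setminus T$ with $|X|\le k$ such that every path in $G$ between two distinct terminals contains a vertex of $X$. Let $\mathcal P(I)$ be the set of all simple paths in $G$ connecting two distinct terminals. The LP-relaxation of $I$ is: minimize $\sum_{v\in V\setminus T} d_v$ subject to $\sum_{v\in V(P)\setminus T} d_v\ge 1$ for every $P\in\mathcal P(I)$ and $d_v\ge 0$ for all $v\in V\setminus T$. $LP(I)$ denotes its optimum value and $p(I)=k-LP(I)$. For $t\in T$, a separating cut of $t$ is a set $S\subseteq V\setminus T$ such that $t$ is disconnected from $T\setminus\{t\}$ in $G-S$; $m(I,t)$ is the minimum size of a separating cut of $t$, and $q(I)=k-\max_{t\in T}m(I,t)$. *)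

theory Defs
  imports Complex_Main "HOL-Library.Extended_Real"
begin

definition simple_graph :: "'a set \<Rightarrow> 'a set set \<Rightarrow> bool" where
  "simple_graph V E \<longleftrightarrow> finite V \<and> (\<forall>e\<in>E. card e = 2 \<and> e \<subseteq> V)"

definition adj :: "'a set set \<Rightarrow> 'a \<Rightarrow> 'a \<Rightarrow> bool" where
  "adj E u v \<longleftrightarrow> {u, v} \<in> E"

definition is_path :: "'a set \<Rightarrow> 'a set set \<Rightarrow> 'a list \<Rightarrow> bool" where
  "is_path V E P \<longleftrightarrow> P \<noteq> [] \<and> distinct P \<and> set P \<subseteq> V \<and>
     (\<forall>i. Suc i < length P \<longrightarrow> adj E (P ! i) (P ! Suc i))"

definition term_paths :: "'a set \<Rightarrow> 'a set set \<Rightarrow> 'a set \<Rightarrow> 'a list set" where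
  "term_paths V E T = {P. is_path V E P \<and> hd P \<in> T \<and> last P \<in> T \<and> hd P \<noteq> last P}"

definition yes_instance :: "'a set \<Rightarrow> 'a set set \<Rightarrow> 'a set \<Rightarrow> int \<Rightarrow> bool" where
  "yes_instance V E T k \<longleftrightarrow>
     (\<exists>X. X \<subseteq> V - T \<and> int (card X) \<le> k \<and> (\<forall>P\<in>term_paths V E T. set P \<inter> X \<noteq> {}))"

text \<open>Feasible solutions of the LP relaxation (values of d outside V - T are irrelevant).\<close>
definition lp_feasible :: "'a set \<Rightarrow> 'a set set \<Rightarrow> 'a set \<Rightarrow> ('a \<Rightarrow> real) \<Rightarrow> bool" where
  "lp_feasible V E T d \<longleftrightarrow> (\<forall>v\<in>V - T. d v \<ge> 0) \<and>
     (\<forall>P\<in>term_paths V E T. (\<Sum>v\<in>set P - T. d v) \<ge> 1)"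

text \<open>LP optimum (as extended real; an infeasible LP has optimum +\<infinity>).\<close>
definition LP :: "'a set \<Rightarrow> 'a set set \<Rightarrow> 'a set \<Rightarrow> ereal" where
  "LP V E T = (INF d\<in>{d. lp_feasible V E T d}. ereal (\<Sum>v\<in>V - T. d v))"

definition LP_fix0 :: "'a set \<Rightarrow> 'a set set \<Rightarrow> 'a set \<Rightarrow> 'a \<Rightarrow> ereal" where
  "LP_fix0 V E T w = (INF d\<in>{d. lp_feasible V E T d \<and> d w = 0}. ereal (\<Sum>v\<in>V - T. d v))"

definition p_param :: "'a set \<Rightarrow> 'a set set \<Rightarrow> 'a set \<Rightarrow> int \<Rightarrow> ereal" where
  "p_param V E T k = ereal (real_of_int k) - LP V E T"

definition separating_cut :: "'a set \<Rightarrow> 'a set set \<Rightarrow> 'a set \<Rightarrow> 'a \<Rightarrow> 'a set \<Rightarrow> bool" where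
  "separating_cut V E T t S \<longleftrightarrow> S \<subseteq> V - T \<and>
     \<not> (\<exists>P. is_path V E P \<and> hd P = t \<and> last P \<in> T - {t} \<and> set P \<inter> S = {})"

definition m_param :: "'a set \<Rightarrow> 'a set set \<Rightarrow> 'a set \<Rightarrow> 'a \<Rightarrow> nat" where
  "m_param V E T t = Min (card ` {S. separating_cut V E T t S})"

definition q_param :: "'a set \<Rightarrow> 'a set set \<Rightarrow> 'a set \<Rightarrow> int \<Rightarrow> int" where
  "q_param V E T k = k - int (Max (m_param V E T ` T))"

end

theory Submission
  imports Defs "HOL-Analysis.Analysis"
begin

(* Let N be the set of non-terminals adjacent to some terminal, N(t) the non-terminal neighbours
   of the terminal t, and let t0 be a terminal maximising m(t), so q = k - m(t0).
   Combinatorial side: since terminals are pairwise non-adjacent, N(t) separates t, so m(t) <= |N(t)|.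
   (a) The union of minimum separating cuts of all terminals except t0 is a multiway cut of size
       at most (s - 1) m(t0); the hypothesis q >= (s-2)/(s-1) k says exactly that this is <= k.
   (b) Under (R2), N - N(t0) is a multiway cut of size |N| - |N(t0)| <= |N| - m(t0).
   LP side: the LP relaxation is half-integral.  For a feasible d, measure from each terminal s
   the d-distance to every non-terminal v; v covers the threshold interval [dist s v, dist s v + d v).
   Rounding at a threshold theta in [0,1/2) (value 1/2 for coverage by one terminal, 1 for two)
   gives a feasible half-integral solution, and averaging over theta shows that some theta
   does not increase the cost.  Combined with (R3) this yields LP >= |N|/2, and then q <= 2p
   gives |N| - m(t0) <= k, so (b) applies. *)

section \<open>Walks and paths\<close>

lemma adj_sym: "adj E u v = adj E v u"
  by (simp add: adj_def insert_commute)

lemma is_path_iff: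
  "is_path V E P \<longleftrightarrow> P \<noteq> [] \<and> distinct P \<and> set P \<subseteq> V \<and> successively (adj E) P"
  unfolding is_path_def successively_conv_nth by auto

lemma walk_contains_path:
  assumes "W \<noteq> []" "successively (adj E) W" "set W \<subseteq> V"
  shows "\<exists>Q. is_path V E Q \<and> hd Q = hd W \<and> last Q = last W \<and> set Q \<subseteq> set W"
  using assms
proof (induction "length W" arbitrary: W rule: less_induct)
  case less
  show ?case
  proof (cases "distinct W")
    case True
    then show ?thesis using less.prems by (auto simp: is_path_iff)
  next
    case False
    then obtain xs y ys zs where W: "W = xs @ [y] @ ys @ [y] @ zs"
      using not_distinct_decomp by blast
    define W' where "W' = xs @ y # zs"
    have "successively (adj E) W'"
      using less.prems(2) unfolding W W'_def
      by (auto simp: successively_append_iff successively_Cons)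
    moreover have "length W' < length W" "W' \<noteq> []" "set W' \<subseteq> set W"
      unfolding W W'_def by auto
    moreover have "hd W' = hd W" "last W' = last W"
      unfolding W W'_def by (cases xs; cases zs; simp)+
    ultimately show ?thesis using less.hyps[of W'] less.prems(3) by fastforce
  qed
qed

lemma successively_adj_rev: "successively (adj E) (rev xs) \<longleftrightarrow> successively (adj E) xs"
  by (simp add: adj_sym)

(* Terminal paths can be read backwards, so it suffices to treat one end of a path. *)
lemma term_paths_rev: "P \<in> term_paths V E T \<Longrightarrow> rev P \<in> term_paths V E T"
  unfolding term_paths_def is_path_iff
  by (auto simp: hd_rev last_rev adj_sym)

lemma term_path_second_vertex:
  assumes nonadj: "\<forall>t\<in>T. \<forall>t'\<in>T. \<not> adj E t t'" and P: "P \<in> term_paths V E T"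
  shows "\<exists>w\<in>set P. w \<in> V - T \<and> adj E (hd P) w"
proof -
  have path: "is_path V E P" and ends: "hd P \<in> T" "hd P \<noteq> last P"
    using P by (auto simp: term_paths_def)
  obtain t w rest where P_eq: "P = t # w # rest"
  proof (cases P)
    case (Cons t xs)
    then show ?thesis using ends that by (cases xs) auto
  qed (use path in \<open>simp add: is_path_def\<close>)
  then have "adj E (hd P) w" "w \<in> V" using path by (auto simp: is_path_iff)
  moreover have "w \<notin> T" using \<open>adj E (hd P) w\<close> ends(1) nonadj by blast
  ultimately show ?thesis using P_eq by auto
qed

lemma walks_join:
  assumes "Q1 \<noteq> []" "successively (adj E) Q1" "Q2 \<noteq> []" "successively (adj E) Q2"
    and ends: "last Q1 = last Q2"
  shows "\<exists>W. W \<noteq> [] \<and> successively (adj E) W \<and> hd W = hd Q1 \<and> last W = hd Q2 \<and>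
             set W \<subseteq> set Q1 \<union> set Q2"
proof -
  define R where "R = tl (rev Q2)"
  have rev_Q2: "rev Q2 = last Q1 # R"
    using list.collapse[of "rev Q2"] assms(3) ends unfolding R_def by (simp add: hd_rev)
  then have "successively (adj E) (last Q1 # R)"
    using assms(4) successively_adj_rev[of E Q2] by simp
  then have "successively (adj E) (Q1 @ R)"
    using assms(1,2) by (auto simp: successively_append_iff successively_Cons)
  moreover have "last (Q1 @ R) = hd Q2"
    using rev_Q2 assms(3) by (cases "R = []") (auto simp: last_rev[symmetric] simp del: last_rev)
  moreover have "set R \<subseteq> set Q2" using rev_Q2 by (metis set_rev set_subset_Cons)
  ultimately show ?thesis using assms(1) by (intro exI[of _ "Q1 @ R"]) auto
qed

section \<open>Facts about reals and Lebesgue measure\<close>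

lemma successive_intervals_cover:
  fixes lo len :: "'a \<Rightarrow> real"
  assumes "vs \<noteq> []" "lo (hd vs) \<le> \<theta>" "\<theta> < lo (last vs) + len (last vs)"
    and "successively (\<lambda>u v. lo v \<le> lo u + len u) vs"
  shows "\<exists>v\<in>set vs. lo v \<le> \<theta> \<and> \<theta> < lo v + len v"
  using assms
proof (induction vs)
  case (Cons u vs)
  show ?case
  proof (cases "\<theta> < lo u + len u")
    case False
    then have "vs \<noteq> []" using Cons.prems(3) by auto
    moreover have "lo (hd vs) \<le> \<theta>"
      using False Cons.prems(4) \<open>vs \<noteq> []\<close> by (auto simp: successively_Cons)
    ultimately show ?thesis
      using Cons.IH Cons.prems(3,4) by (auto simp: successively_Cons)
  qed (use Cons.prems(2) in auto)
qed simp

lemma exists_two_smallest: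
  fixes f :: "'a \<Rightarrow> 'b::linorder"
  assumes "finite S" "2 \<le> card S"
  obtains a b where "a \<in> S" "b \<in> S - {a}" "\<forall>s\<in>S. f a \<le> f s" "\<forall>s\<in>S - {a}. f b \<le> f s"
proof -
  define a where "a = arg_min_on f S"
  have "S \<noteq> {}" using assms by auto
  then have a: "a \<in> S" "\<forall>s\<in>S. f a \<le> f s"
    using arg_min_if_finite[OF assms(1) \<open>S \<noteq> {}\<close>, of f] unfolding a_def by (auto simp: not_less)
  have "card (S - {a}) = card S - 1" using a(1) assms(1) by simp
  then have "0 < card (S - {a})" using assms(2) by linarith
  then have "S - {a} \<noteq> {}" by (metis card.empty less_irrefl)
  then have "arg_min_on f (S - {a}) \<in> S - {a}" "\<forall>s\<in>S - {a}. f (arg_min_on f (S - {a})) \<le> f s"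
    using arg_min_if_finite[of "S - {a}" f] assms(1) by (auto simp: not_less)
  then show ?thesis using that a by blast
qed

lemma fmeasurable_subset_Ico:
  assumes "A \<subseteq> {a..<b::real}" "A \<in> sets lborel"
  shows "A \<in> fmeasurable lborel" "measure lborel A \<le> max 0 (b - a)"
proof -
  have Ico: "{a..<b} \<in> fmeasurable lborel"
  proof (cases "a \<le> b")
    case True then show ?thesis by (intro fmeasurableI) auto
  qed simp
  have "measure lborel {a..<b} = max 0 (b - a)"
  proof (cases "a \<le> b")
    case True then show ?thesis by (simp add: measure_def)
  qed simp
  moreover show "A \<in> fmeasurable lborel"
    using Ico assms by (rule fmeasurableI2[of "{a..<b}"])
  ultimately show "measure lborel A \<le> max 0 (b - a)"
    using measure_mono_fmeasurable[OF assms Ico] by linarith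
qed

(* A nonnegative integer-valued integrable function does not exceed its integral divided
   by b - a somewhere on [a, b): otherwise it would be at least the next integer there. *)
lemma integer_valued_below_average:
  fixes g :: "real \<Rightarrow> real"
  assumes g: "integrable lborel g" "\<And>\<theta>. g \<theta> \<in> \<int>" "\<And>\<theta>. 0 \<le> g \<theta>" and ab: "a < b"
  shows "\<exists>\<theta>\<in>{a..<b}. g \<theta> \<le> integral\<^sup>L lborel g / (b - a)"
proof (rule ccontr)
  define C where "C = integral\<^sup>L lborel g / (b - a)"
  define c :: real where "c = of_int (\<lfloor>C\<rfloor> + 1)"
  assume "\<not> ?thesis"
  then have above: "C < g \<theta>" if "\<theta> \<in> {a..<b}" for \<theta>
    using that unfolding C_def by (auto simp: not_le)
  have "c \<le> g \<theta>" if "\<theta> \<in> {a..<b}" for \<theta>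
  proof -
    obtain z where z: "g \<theta> = of_int z" using g(2)[of \<theta>] by (auto elim: Ints_cases)
    then have "\<lfloor>C\<rfloor> < z" using above[OF that] by (simp add: floor_less_iff)
    then show ?thesis unfolding c_def using z by simp
  qed
  moreover have "integrable lborel (\<lambda>\<theta>. c * indicator {a..<b} \<theta>)"
    using ab by (intro integrable_mult_right integrable_real_indicator) auto
  ultimately have "integral\<^sup>L lborel (\<lambda>\<theta>. c * indicator {a..<b} \<theta>) \<le> integral\<^sup>L lborel g"
    using g(1,3) by (intro integral_mono) (auto simp: indicator_def)
  then have "c * (b - a) \<le> C * (b - a)"
    using ab unfolding C_def by (simp add: measure_def)
  moreover have "C < c" unfolding c_def by linarith
  ultimately show False using ab by (simp add: mult_le_cancel_right)
qed

section \<open>Half-integrality of the LP relaxation\<close>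

(* The d-length of a walk, ignoring the vertices in X (terminals, and possibly an end vertex). *)
definition cost :: "('a \<Rightarrow> real) \<Rightarrow> 'a set \<Rightarrow> 'a list \<Rightarrow> real" where
  "cost d X Q = (\<Sum>u\<in>set Q - X. d u)"

locale lp_solution =
  fixes V :: "'a set" and E :: "'a set set" and T :: "'a set" and d :: "'a \<Rightarrow> real"
  assumes finite_V: "finite V" and terminals_in_V: "T \<subseteq> V"
    and terminals_nonadjacent: "\<forall>t\<in>T. \<forall>t'\<in>T. \<not> adj E t t'"
    and feasible: "lp_feasible V E T d"
begin

lemma d_nonneg: "u \<in> V - T \<Longrightarrow> 0 \<le> d u"
  using feasible by (simp add: lp_feasible_def)

lemma cost_mono:
  assumes "set Q - X \<subseteq> set R - Y" "set R \<subseteq> V" "T \<subseteq> Y"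
  shows "cost d X Q \<le> cost d Y R"
  unfolding cost_def by (rule sum_mono2) (use assms d_nonneg in auto)

lemma cost_nonneg: "set Q \<subseteq> V \<Longrightarrow> T \<subseteq> X \<Longrightarrow> 0 \<le> cost d X Q"
  unfolding cost_def by (rule sum_nonneg) (use d_nonneg in blast)

lemma cost_split:
  assumes "u \<in> set Q" "u \<notin> T"
  shows "cost d T Q = cost d (insert u T) Q + d u"
proof -
  have "set Q - T = insert u (set Q - insert u T)" using assms by blast
  then have "sum d (set Q - T) = d u + sum d (set Q - insert u T)"
    by (metis sum.insert finite_Diff finite_set Diff_iff insertI1)
  then show ?thesis unfolding cost_def by simp
qed

lemma walk_cost_ge_one:
  assumes "W \<noteq> []" "successively (adj E) W" "set W \<subseteq> V"
    and "hd W \<in> T" "last W \<in> T" "hd W \<noteq> last W"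
  shows "1 \<le> cost d T W"
proof -
  obtain R where R: "is_path V E R" "hd R = hd W" "last R = last W" "set R \<subseteq> set W"
    using walk_contains_path[OF assms(1-3)] by blast
  then have "R \<in> term_paths V E T" using assms by (simp add: term_paths_def)
  then have "1 \<le> cost d T R" using feasible by (simp add: lp_feasible_def cost_def)
  also have "\<dots> \<le> cost d T W" using R(4) assms(3) by (intro cost_mono) auto
  finally show ?thesis .
qed

(* dist_from t v is the d-length of a shortest path from t to v, not counting v itself,
   truncated at 1. *)
definition paths_between :: "'a \<Rightarrow> 'a \<Rightarrow> 'a list set" where
  "paths_between t v = {Q. is_path V E Q \<and> hd Q = t \<and> last Q = v}"

definition dist_from :: "'a \<Rightarrow> 'a \<Rightarrow> real" where
  "dist_from t v = Min (insert 1 (cost d (insert v T) ` paths_between t v))"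

lemma paths_between_finite: "finite (paths_between t v)"
proof (rule finite_subset)
  show "paths_between t v \<subseteq> {xs. set xs \<subseteq> V \<and> length xs \<le> card V}"
  proof
    fix Q assume "Q \<in> paths_between t v"
    then have "distinct Q" "set Q \<subseteq> V" unfolding paths_between_def is_path_def by auto
    then have "length Q \<le> card V"
      using card_mono[OF finite_V] distinct_card[of Q] by metis
    with \<open>set Q \<subseteq> V\<close> show "Q \<in> {xs. set xs \<subseteq> V \<and> length xs \<le> card V}" by simp
  qed
qed (rule finite_lists_length_le[OF finite_V])

lemma paths_betweenD:
  "Q \<in> paths_between t v \<Longrightarrow>
     Q \<noteq> [] \<and> successively (adj E) Q \<and> set Q \<subseteq> V \<and> hd Q = t \<and> last Q = v"
  unfolding paths_between_def is_path_iff by auto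

lemma dist_le_one: "dist_from t v \<le> 1"
  unfolding dist_from_def using paths_between_finite by simp

lemma dist_le_cost: "Q \<in> paths_between t v \<Longrightarrow> dist_from t v \<le> cost d (insert v T) Q"
  unfolding dist_from_def using paths_between_finite by simp

lemma dist_nonneg: "0 \<le> dist_from t v"
  unfolding dist_from_def using paths_between_finite
  by (simp add: Min_ge_iff) (meson cost_nonneg paths_betweenD subset_insertI)

lemma dist_attained:
  assumes "dist_from t v < 1"
  shows "\<exists>Q\<in>paths_between t v. cost d (insert v T) Q = dist_from t v"
proof -
  have "dist_from t v \<in> insert 1 (cost d (insert v T) ` paths_between t v)"
    unfolding dist_from_def using paths_between_finite by (intro Min_in) auto
  with assms show ?thesis by auto
qed

(* The three properties of dist_from that drive the rounding: it vanishes on the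
   neighbours of t, grows by at most d u along an edge u v, and dist_from t u + d u >= 1
   for the neighbours u of every other terminal (a shorter route would violate an LP
   constraint). *)
lemma dist_neighbour:
  assumes "t \<in> T" "v \<in> V - T" "adj E t v"
  shows "dist_from t v = 0"
proof -
  have "[t, v] \<in> paths_between t v"
    using assms terminals_in_V by (auto simp: paths_between_def is_path_iff)
  then have "dist_from t v \<le> cost d (insert v T) [t, v]" by (rule dist_le_cost)
  also have "\<dots> = 0" using assms(1) unfolding cost_def by simp
  finally show ?thesis using dist_nonneg[of t v] by linarith
qed

lemma dist_other_terminal:
  assumes u: "u \<in> V - T" and t: "t \<in> T" and x: "x \<in> T" "x \<noteq> t" and ux: "adj E u x"
  shows "1 \<le> dist_from t u + d u"
proof (rule ccontr)
  assume short: "\<not> 1 \<le> dist_from t u + d u"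
  then have "dist_from t u < 1" using d_nonneg[OF u] by linarith
  then obtain Q where Q: "Q \<in> paths_between t u" "cost d (insert u T) Q = dist_from t u"
    using dist_attained by blast
  note Q_walk = paths_betweenD[OF Q(1)]
  have "1 \<le> cost d T (Q @ [x])"
    by (rule walk_cost_ge_one) (use Q_walk t x ux terminals_in_V in \<open>auto simp: successively_append_iff\<close>)
  also have "cost d T (Q @ [x]) = cost d T Q"
    using x(1) unfolding cost_def by (simp add: insert_Diff_if)
  also have "\<dots> = cost d (insert u T) Q + d u"
    using Q_walk u by (intro cost_split) auto
  finally show False using Q(2) short by linarith
qed

lemma dist_step:
  assumes u: "u \<in> V - T" and v: "v \<in> V - T" and uv: "adj E u v"
  shows "dist_from t v \<le> dist_from t u + d u"
proof (cases "dist_from t u < 1")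
  case False
  then show ?thesis using dist_le_one[of t v] d_nonneg[OF u] by linarith
next
  case True
  then obtain Q where Q: "Q \<in> paths_between t u" "cost d (insert u T) Q = dist_from t u"
    using dist_attained by blast
  note Q_walk = paths_betweenD[OF Q(1)]
  have "successively (adj E) (Q @ [v])"
    using Q_walk uv by (auto simp: successively_append_iff)
  then obtain R where R: "is_path V E R" "hd R = hd (Q @ [v])" "last R = v" "set R \<subseteq> set (Q @ [v])"
    using walk_contains_path[of "Q @ [v]" E V] Q_walk v by auto
  then have "R \<in> paths_between t v" using Q_walk by (simp add: paths_between_def)
  then have "dist_from t v \<le> cost d (insert v T) R" by (rule dist_le_cost)
  also have "\<dots> \<le> cost d T Q"
    using R(4) Q_walk by (intro cost_mono) auto
  also have "\<dots> = cost d (insert u T) Q + d u"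
    using Q_walk u by (intro cost_split) auto
  finally show ?thesis using Q(2) by simp
qed

(* No vertex is close to two terminals: the two shortest paths combine into a walk
   between distinct terminals. *)
lemma dist_pair:
  assumes s: "s \<in> T" "s' \<in> T" "s \<noteq> s'" and v: "v \<in> V - T"
  shows "1 \<le> dist_from s v + dist_from s' v + d v"
proof (cases "dist_from s v < 1 \<and> dist_from s' v < 1")
  case False
  then show ?thesis using dist_nonneg[of s v] dist_nonneg[of s' v] d_nonneg[OF v] by auto
next
  case True
  then obtain Q1 Q2 where Q1: "Q1 \<in> paths_between s v" "cost d (insert v T) Q1 = dist_from s v"
    and Q2: "Q2 \<in> paths_between s' v" "cost d (insert v T) Q2 = dist_from s' v"
    using dist_attained by meson
  note Q1_walk = paths_betweenD[OF Q1(1)] and Q2_walk = paths_betweenD[OF Q2(1)]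
  obtain W where W: "W \<noteq> []" "successively (adj E) W" "hd W = s" "last W = s'"
    and W_sub: "set W \<subseteq> set Q1 \<union> set Q2"
    using walks_join[of Q1 E Q2] Q1_walk Q2_walk by auto
  have "1 \<le> cost d T W"
    by (rule walk_cost_ge_one) (use W W_sub Q1_walk Q2_walk s in auto)
  also have "\<dots> \<le> (\<Sum>u\<in>insert v ((set Q1 - insert v T) \<union> (set Q2 - insert v T)). d u)"
    unfolding cost_def by (rule sum_mono2) (use W_sub Q1_walk Q2_walk v d_nonneg in auto)
  also have "\<dots> \<le> d v + cost d (insert v T) Q1 + cost d (insert v T) Q2"
  proof -
    let ?A = "set Q1 - insert v T" and ?B = "set Q2 - insert v T"
    have "sum d (?A \<union> ?B) + sum d (?A \<inter> ?B) = sum d ?A + sum d ?B"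
      by (rule sum.union_inter) auto
    moreover have "0 \<le> sum d (?A \<inter> ?B)"
      using Q1_walk by (intro sum_nonneg) (auto intro: d_nonneg)
    ultimately show ?thesis unfolding cost_def by simp
  qed
  finally show ?thesis using Q1(2) Q2(2) by linarith
qed

(* Between the start t of a terminal path and the next terminal on it, the intervals
   [dist t v, dist t v + d v) form a chain from 0 to beyond 1, so one of them contains
   the threshold theta. *)
lemma threshold_crossed:
  assumes P: "P \<in> term_paths V E T" and \<theta>: "0 \<le> \<theta>" "\<theta> < 1"
  shows "\<exists>v\<in>set P - T. dist_from (hd P) v \<le> \<theta> \<and> \<theta> < dist_from (hd P) v + d v"
proof -
  define t where "t = hd P"
  have path: "P \<noteq> []" "distinct P" "set P \<subseteq> V" "successively (adj E) P"
    and ends: "t \<in> T" "last P \<in> T" "t \<noteq> last P"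
    using P unfolding t_def term_paths_def is_path_iff by auto
  obtain rest where P_eq: "P = t # rest"
    using path(1) unfolding t_def by (metis list.collapse)
  have "last P \<in> set rest" using ends(3) unfolding P_eq by (metis last.simps last_in_set)
  then obtain xs x ys where rest: "rest = xs @ x # ys" and x: "x \<in> T"
    and xs_nonterminal: "\<forall>y\<in>set xs. y \<notin> T"
    using ends(2) split_list_first_propE[of rest "\<lambda>y. y \<in> T"] by blast
  have "x \<noteq> t" using path(2) unfolding P_eq rest by auto
  have walk: "successively (adj E) (t # xs @ x # ys)" using path(4) unfolding P_eq rest .
  have "xs \<noteq> []"
    using walk ends(1) x terminals_nonadjacent by (auto simp: successively_Cons)
  then have adj_first: "adj E t (hd xs)" and adj_last: "adj E (last xs) x"
    and walk_xs: "successively (adj E) xs"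
    using walk by (auto simp: successively_Cons successively_append_iff)
  have xs_in: "set xs \<subseteq> V - T" using path(3) xs_nonterminal unfolding P_eq rest by auto
  have "\<exists>v\<in>set xs. dist_from t v \<le> \<theta> \<and> \<theta> < dist_from t v + d v"
  proof (rule successive_intervals_cover[OF \<open>xs \<noteq> []\<close>])
    show "dist_from t (hd xs) \<le> \<theta>"
      using dist_neighbour[OF ends(1) _ adj_first] xs_in hd_in_set[OF \<open>xs \<noteq> []\<close>] \<theta>(1)
      by auto
    show "\<theta> < dist_from t (last xs) + d (last xs)"
      using dist_other_terminal[OF _ ends(1) x \<open>x \<noteq> t\<close> adj_last] xs_in last_in_set[OF \<open>xs \<noteq> []\<close>]
        \<theta>(2) by fastforce
    show "successively (\<lambda>u v. dist_from t v \<le> dist_from t u + d u) xs"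
      using walk_xs by (rule successively_mono) (use xs_in dist_step in blast)
  qed
  then show ?thesis using xs_in unfolding t_def[symmetric] P_eq rest by auto
qed

(* The threshold rounding: v gets 1/2 for every terminal whose interval of v contains
   theta, capped at 1. *)
definition cover_interval :: "'a \<Rightarrow> 'a \<Rightarrow> real set" where
  "cover_interval s v = {dist_from s v ..< dist_from s v + d v}"

definition covered :: "'a \<Rightarrow> real set" where
  "covered v = {0..<1/2} \<inter> (\<Union>s\<in>T. cover_interval s v)"

definition doubly_covered :: "'a \<Rightarrow> real set" where
  "doubly_covered v = {0..<1/2} \<inter> (\<Union>s\<in>T. \<Union>s'\<in>T - {s}. cover_interval s v \<inter> cover_interval s' v)"

definition rounded :: "real \<Rightarrow> 'a \<Rightarrow> real" where
  "rounded \<theta> v = (indicator (covered v) \<theta> + indicator (doubly_covered v) \<theta>) / 2"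

lemma finite_T: "finite T"
  using finite_V terminals_in_V by (rule finite_subset[rotated])

lemma covered_sets: "covered v \<in> sets lborel" "doubly_covered v \<in> sets lborel"
  unfolding covered_def doubly_covered_def cover_interval_def sets_lborel
  by (intro sets.Int sets.finite_UN finite_T finite_Diff; simp)+

lemma rounded_half_integral: "rounded \<theta> v = 0 \<or> rounded \<theta> v = 1/2 \<or> rounded \<theta> v = 1"
  unfolding rounded_def covered_def doubly_covered_def indicator_def by auto

(* Each terminal path contains a vertex covered from its start and one covered from its
   end: two different vertices of value 1/2, or one of value 1. *)
lemma rounded_feasible:
  assumes \<theta>: "\<theta> \<in> {0..<1/2}"
  shows "lp_feasible V E T (rounded \<theta>)"
  unfolding lp_feasible_def
proof (intro conjI ballI)
  fix v show "0 \<le> rounded \<theta> v" unfolding rounded_def by simp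
next
  fix P assume P: "P \<in> term_paths V E T"
  have ends: "hd P \<in> T" "last P \<in> T" "hd P \<noteq> last P"
    using P by (auto simp: term_paths_def)
  have \<theta>_range: "0 \<le> \<theta>" "\<theta> < 1" using \<theta> by auto
  obtain v1 where v1: "v1 \<in> set P - T" "\<theta> \<in> cover_interval (hd P) v1"
    using threshold_crossed[OF P \<theta>_range] by (auto simp: cover_interval_def)
  obtain v2 where v2: "v2 \<in> set P - T" "\<theta> \<in> cover_interval (last P) v2"
    using threshold_crossed[OF term_paths_rev[OF P] \<theta>_range] by (auto simp: cover_interval_def hd_rev)
  have half: "1/2 \<le> rounded \<theta> v" if "v \<in> {v1, v2}" for v
    using that v1(2) v2(2) ends \<theta> unfolding rounded_def covered_def by (auto simp: indicator_def)
  have nonneg: "0 \<le> rounded \<theta> v" for v unfolding rounded_def by simp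
  show "1 \<le> (\<Sum>v\<in>set P - T. rounded \<theta> v)"
  proof (cases "v1 = v2")
    case True
    then have "\<theta> \<in> doubly_covered v1 \<inter> covered v1"
      using v1(2) v2(2) ends \<theta> unfolding doubly_covered_def covered_def by blast
    then have "rounded \<theta> v1 = 1" unfolding rounded_def by simp
    then show ?thesis using member_le_sum[OF v1(1), of "rounded \<theta>"] nonneg by simp
  next
    case False
    have "1 \<le> (\<Sum>v\<in>{v1, v2}. rounded \<theta> v)" using False half[of v1] half[of v2] by simp
    also have "\<dots> \<le> (\<Sum>v\<in>set P - T. rounded \<theta> v)"
      by (rule sum_mono2) (use v1 v2 nonneg in auto)
    finally show ?thesis .
  qed
qed

(* The thresholds at which v is rounded up have total measure at most d v: only the
   nearest terminal s1 can cover below dist s2 v, and dist s1 v + dist s2 v + d v >= 1. *)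
lemma covered_measure_le:
  assumes T2: "2 \<le> card T" and v: "v \<in> V - T"
  shows "measure lborel (covered v) + measure lborel (doubly_covered v) \<le> d v"
proof -
  obtain s1 s2 where s1: "s1 \<in> T" and s2: "s2 \<in> T - {s1}"
    and nearest: "\<forall>s\<in>T. dist_from s1 v \<le> dist_from s v"
    and second: "\<forall>s\<in>T - {s1}. dist_from s2 v \<le> dist_from s v"
    using exists_two_smallest[OF finite_T T2, of "\<lambda>s. dist_from s v"] by blast
  have pair: "1 \<le> dist_from s1 v + dist_from s2 v + d v"
    using dist_pair[of s1 s2 v] s1 s2 v by auto
  have "s2 \<in> T" using s2 by blast
  then have s12: "dist_from s1 v \<le> dist_from s2 v" using nearest by blast
  have other: "dist_from s2 v \<le> \<theta>" if "\<theta> \<in> cover_interval s v" "s \<in> T - {s1}" for \<theta> s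
    using that second by (force simp: cover_interval_def)
  have covered_sub: "covered v \<subseteq> {dist_from s1 v..<1/2}"
    using nearest by (force simp: covered_def cover_interval_def)
  have doubly_sub: "doubly_covered v \<subseteq> {dist_from s2 v..<1/2}"
  proof
    fix \<theta> assume "\<theta> \<in> doubly_covered v"
    then obtain s s' where "\<theta> \<in> {0..<1/2}" "s \<in> T" "s' \<in> T - {s}"
      "\<theta> \<in> cover_interval s v" "\<theta> \<in> cover_interval s' v"
      unfolding doubly_covered_def by blast
    then show "\<theta> \<in> {dist_from s2 v..<1/2}" using other by (cases "s = s1") auto
  qed
  show ?thesis
  proof (cases "1/2 \<le> dist_from s2 v")
    case True
    then have "doubly_covered v = {}" using doubly_sub by auto
    moreover have "covered v \<subseteq> cover_interval s1 v"
    proof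
      fix \<theta> assume \<theta>: "\<theta> \<in> covered v"
      then obtain s where "s \<in> T" "\<theta> \<in> cover_interval s v" "\<theta> < 1/2"
        unfolding covered_def by auto
      then show "\<theta> \<in> cover_interval s1 v" using other[of \<theta> s] True by (cases "s = s1") auto
    qed
    then have "covered v \<subseteq> {dist_from s1 v..<dist_from s1 v + d v}"
      by (simp add: cover_interval_def)
    then have "measure lborel (covered v) \<le> max 0 (dist_from s1 v + d v - dist_from s1 v)"
      by (rule fmeasurable_subset_Ico(2)[OF _ covered_sets(1)])
    ultimately show ?thesis using d_nonneg[OF v] by simp
  next
    case False
    have "measure lborel (covered v) \<le> max 0 (1/2 - dist_from s1 v)"
      by (rule fmeasurable_subset_Ico(2)[OF covered_sub covered_sets(1)])
    moreover have "measure lborel (doubly_covered v) \<le> max 0 (1/2 - dist_from s2 v)"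
      by (rule fmeasurable_subset_Ico(2)[OF doubly_sub covered_sets(2)])
    ultimately show ?thesis using False s12 pair by auto
  qed
qed

(* Averaging over theta: every feasible solution can be rounded to a feasible
   half-integral solution of no larger cost. *)
theorem half_integral_rounding:
  assumes T2: "2 \<le> card T"
  obtains d' where "lp_feasible V E T d'" "(\<Sum>v\<in>V - T. d' v) \<le> (\<Sum>v\<in>V - T. d v)"
    "\<And>v. d' v = 0 \<or> d' v = 1/2 \<or> d' v = 1"
proof -
  define g :: "real \<Rightarrow> real"
    where "g \<theta> = (\<Sum>v\<in>V - T. indicator (covered v) \<theta> + indicator (doubly_covered v) \<theta>)" for \<theta>
  have fin: "covered v \<in> fmeasurable lborel" "doubly_covered v \<in> fmeasurable lborel" for v
    using fmeasurable_subset_Ico(1)[OF _ covered_sets(1), of v 0 "1/2"]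
      fmeasurable_subset_Ico(1)[OF _ covered_sets(2), of v 0 "1/2"]
    unfolding covered_def doubly_covered_def by auto
  have integrable: "integrable lborel (indicator (covered v) :: real \<Rightarrow> real)"
    "integrable lborel (indicator (doubly_covered v) :: real \<Rightarrow> real)" for v
    using fin[of v] by (auto intro!: integrable_real_indicator simp: fmeasurable_def)
  have "integral\<^sup>L lborel g = (\<Sum>v\<in>V - T. measure lborel (covered v) + measure lborel (doubly_covered v))"
    unfolding g_def using integrable by (simp add: integral_add)
  also have "\<dots> \<le> (\<Sum>v\<in>V - T. d v)"
    by (rule sum_mono) (rule covered_measure_le[OF T2])
  finally have int_g: "integral\<^sup>L lborel g \<le> (\<Sum>v\<in>V - T. d v)" .
  have "\<exists>\<theta>\<in>{0..<1/2}. g \<theta> \<le> integral\<^sup>L lborel g / (1/2 - 0)"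
  proof (rule integer_valued_below_average)
    show "integrable lborel g" unfolding g_def using integrable by simp
    show "g \<theta> \<in> \<int>" for \<theta> unfolding g_def by (intro Ints_sum Ints_add) (auto simp: indicator_def)
    show "0 \<le> g \<theta>" for \<theta> unfolding g_def by (intro sum_nonneg) auto
  qed simp
  then obtain \<theta> where \<theta>: "\<theta> \<in> {0..<1/2}" and g_small: "g \<theta> \<le> 2 * integral\<^sup>L lborel g" by auto
  have "(\<Sum>v\<in>V - T. rounded \<theta> v) = g \<theta> / 2"
    unfolding rounded_def g_def by (simp add: sum_divide_distrib)
  then have "(\<Sum>v\<in>V - T. rounded \<theta> v) \<le> (\<Sum>v\<in>V - T. d v)" using g_small int_g by linarith
  then show ?thesis using that rounded_feasible[OF \<theta>] rounded_half_integral by blast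
qed

end

section \<open>Multiway cuts from neighbourhoods and separating cuts\<close>

definition terminal_nbrs :: "'a set \<Rightarrow> 'a set set \<Rightarrow> 'a set \<Rightarrow> 'a \<Rightarrow> 'a set" where
  "terminal_nbrs V E T t = {w \<in> V - T. adj E t w}"

definition all_terminal_nbrs :: "'a set \<Rightarrow> 'a set set \<Rightarrow> 'a set \<Rightarrow> 'a set" where
  "all_terminal_nbrs V E T = {w \<in> V - T. \<exists>t\<in>T. adj E t w}"

definition multiway_cut :: "'a set \<Rightarrow> 'a set set \<Rightarrow> 'a set \<Rightarrow> 'a set \<Rightarrow> bool" where
  "multiway_cut V E T X \<longleftrightarrow> X \<subseteq> V - T \<and> (\<forall>P\<in>term_paths V E T. set P \<inter> X \<noteq> {})"

lemma yes_instanceI: "multiway_cut V E T X \<Longrightarrow> int (card X) \<le> k \<Longrightarrow> yes_instance V E T k"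
  unfolding multiway_cut_def yes_instance_def by blast

(* By reversing paths, it suffices to meet the terminal paths not starting in t0. *)
lemma multiway_cutI_avoiding:
  assumes "X \<subseteq> V - T"
    and hits: "\<And>P. P \<in> term_paths V E T \<Longrightarrow> hd P \<noteq> t0 \<Longrightarrow> set P \<inter> X \<noteq> {}"
  shows "multiway_cut V E T X"
  unfolding multiway_cut_def
proof (intro conjI ballI)
  fix P assume P: "P \<in> term_paths V E T"
  show "set P \<inter> X \<noteq> {}"
  proof (cases "hd P = t0")
    case True
    then have "hd (rev P) \<noteq> t0" using P by (auto simp: term_paths_def hd_rev)
    then show ?thesis using hits[OF term_paths_rev[OF P]] by simp
  qed (use hits P in blast)
qed (rule assms(1))

lemma neighbours_separate:
  assumes nonadj: "\<forall>t\<in>T. \<forall>t'\<in>T. \<not> adj E t t'" and t: "t \<in> T"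
  shows "separating_cut V E T t (terminal_nbrs V E T t)"
  unfolding separating_cut_def
proof (intro conjI notI)
  show "terminal_nbrs V E T t \<subseteq> V - T" unfolding terminal_nbrs_def by blast
next
  assume "\<exists>P. is_path V E P \<and> hd P = t \<and> last P \<in> T - {t} \<and> set P \<inter> terminal_nbrs V E T t = {}"
  then obtain P where P: "is_path V E P" "hd P = t" "last P \<in> T - {t}"
    and avoids: "set P \<inter> terminal_nbrs V E T t = {}" by blast
  then have "P \<in> term_paths V E T" using t by (auto simp: term_paths_def)
  then obtain w where "w \<in> set P" "w \<in> V - T" "adj E t w"
    using term_path_second_vertex[OF nonadj] P(2) by blast
  then show False using avoids unfolding terminal_nbrs_def by blast
qed

lemma separating_cut_hits:
  "separating_cut V E T t S \<Longrightarrow> P \<in> term_paths V E T \<Longrightarrow> hd P = t \<Longrightarrow> set P \<inter> S \<noteq> {}"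
  unfolding separating_cut_def term_paths_def by auto

lemma finite_separating_cuts: "finite V \<Longrightarrow> finite {S. separating_cut V E T t S}"
  unfolding separating_cut_def by (rule finite_subset[of _ "Pow (V - T)"]) auto

lemma m_param_le:
  assumes "finite V" "separating_cut V E T t S"
  shows "m_param V E T t \<le> card S"
  unfolding m_param_def using finite_separating_cuts[OF assms(1)] assms(2) by (intro Min_le) auto

lemma m_param_attained:
  assumes "finite V" "separating_cut V E T t S"
  obtains S' where "separating_cut V E T t S'" "card S' = m_param V E T t"
proof -
  have "m_param V E T t \<in> card ` {S. separating_cut V E T t S}"
    unfolding m_param_def using finite_separating_cuts[OF assms(1)] assms(2) by (intro Min_in) auto
  then show ?thesis using that by auto
qed

(* Case (a): minimum separating cuts of all terminals but t0 form a multiway cut. *)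
lemma yes_by_separating_cuts:
  assumes finite: "finite V" "T \<subseteq> V" and nonadj: "\<forall>t\<in>T. \<forall>t'\<in>T. \<not> adj E t t'"
    and t0: "t0 \<in> T" and bounded: "\<forall>t\<in>T. m_param V E T t \<le> M"
    and budget: "int ((card T - 1) * M) \<le> k"
  shows "yes_instance V E T k"
proof -
  have "\<forall>t\<in>T. \<exists>S. separating_cut V E T t S \<and> card S = m_param V E T t"
    using m_param_attained[OF finite(1) neighbours_separate[OF nonadj]] by blast
  then obtain S where S: "\<forall>t\<in>T. separating_cut V E T t (S t) \<and> card (S t) = m_param V E T t"
    by metis
  define X where "X = (\<Union>t\<in>T - {t0}. S t)"
  have finite_T: "finite T" using finite by (rule finite_subset[rotated])
  have "multiway_cut V E T X"
  proof (rule multiway_cutI_avoiding)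
    show "X \<subseteq> V - T"
      unfolding X_def using S by (auto simp: separating_cut_def)
  next
    fix P assume P: "P \<in> term_paths V E T" "hd P \<noteq> t0"
    then have "hd P \<in> T" by (simp add: term_paths_def)
    then have "set P \<inter> S (hd P) \<noteq> {}"
      using separating_cut_hits[of V E T "hd P" "S (hd P)" P] S P(1) by simp
    moreover have "S (hd P) \<subseteq> X" unfolding X_def using P(2) \<open>hd P \<in> T\<close> by blast
    ultimately show "set P \<inter> X \<noteq> {}" by blast
  qed
  moreover have "card X \<le> (card T - 1) * M"
  proof -
    have "card X \<le> (\<Sum>t\<in>T - {t0}. card (S t))" unfolding X_def using finite_T by (intro card_UN_le) simp
    also have "\<dots> \<le> (\<Sum>t\<in>T - {t0}. M)" using S bounded by (intro sum_mono) auto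
    also have "\<dots> = (card T - 1) * M" using t0 finite_T by simp
    finally show ?thesis .
  qed
  ultimately show ?thesis using budget yes_instanceI[of V E T X k] by linarith
qed

(* Case (b): under (R2), N - N(t0) is a multiway cut, since the second vertex of a
   terminal path starting in t <> t0 lies in N(t) and hence not in N(t0). *)
lemma yes_by_neighbourhoods:
  assumes finite: "finite V" and nonadj: "\<forall>t\<in>T. \<forall>t'\<in>T. \<not> adj E t t'"
    and unshared: "\<forall>v\<in>V - T. \<forall>t\<in>T. \<forall>t'\<in>T. t \<noteq> t' \<longrightarrow> \<not> (adj E v t \<and> adj E v t')"
    and t0: "t0 \<in> T"
    and budget: "int (card (all_terminal_nbrs V E T)) - int (m_param V E T t0) \<le> k"
  shows "yes_instance V E T k"
proof -
  define N where "N = all_terminal_nbrs V E T"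
  define N0 where "N0 = terminal_nbrs V E T t0"
  have N0_sub: "N0 \<subseteq> N"
    unfolding N_def N0_def terminal_nbrs_def all_terminal_nbrs_def using t0 by blast
  have finite_N: "finite N" unfolding N_def all_terminal_nbrs_def using finite by simp
  have "multiway_cut V E T (N - N0)"
  proof (rule multiway_cutI_avoiding)
    show "N - N0 \<subseteq> V - T" unfolding N_def all_terminal_nbrs_def by blast
    fix P assume P: "P \<in> term_paths V E T" "hd P \<noteq> t0"
    have "hd P \<in> T" using P(1) by (simp add: term_paths_def)
    obtain w where w: "w \<in> set P" "w \<in> V - T" "adj E (hd P) w"
      using term_path_second_vertex[OF nonadj P(1)] by blast
    have "w \<in> N" using w \<open>hd P \<in> T\<close> unfolding N_def all_terminal_nbrs_def by blast
    moreover have "w \<notin> N0"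
      using unshared w \<open>hd P \<in> T\<close> t0 P(2) unfolding N0_def terminal_nbrs_def by (auto simp: adj_sym)
    ultimately show "set P \<inter> (N - N0) \<noteq> {}" using w(1) by blast
  qed
  moreover have "card (N - N0) = card N - card N0"
    using card_Diff_subset[OF finite_subset[OF N0_sub finite_N] N0_sub] .
  moreover have "m_param V E T t0 \<le> card N0"
    unfolding N0_def by (rule m_param_le[OF finite neighbours_separate[OF nonadj t0]])
  moreover have "card N0 \<le> card N" using card_mono[OF finite_N N0_sub] .
  ultimately show ?thesis using budget unfolding N_def by (intro yes_instanceI) auto
qed

section \<open>The LP lower bound and the main theorem\<close>
lemma LP_fix0_le_cost:
  "lp_feasible V E T d \<Longrightarrow> d w = 0 \<Longrightarrow> LP_fix0 V E T w \<le> ereal (\<Sum>v\<in>V - T. d v)"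
  unfolding LP_fix0_def by (rule INF_lower) simp

lemma LP_nonneg: "0 \<le> LP V E T"
  unfolding LP_def zero_ereal_def
  by (rule INF_greatest) (auto simp: lp_feasible_def intro: sum_nonneg)

(* Under (R3), LP >= |N|/2: a cheaper solution rounds to a half-integral solution with
   some neighbour of value 0, which is no cheaper than LP with that value fixed to 0. *)
theorem LP_ge_half_neighbours:
  assumes finite: "finite V" "T \<subseteq> V" and T2: "2 \<le> card T"
    and nonadj: "\<forall>t\<in>T. \<forall>t'\<in>T. \<not> adj E t t'"
    and rigid: "\<forall>t\<in>T. \<forall>w\<in>V - T. adj E t w \<longrightarrow> LP_fix0 V E T w > LP V E T"
  shows "ereal (real (card (all_terminal_nbrs V E T)) / 2) \<le> LP V E T"
proof (rule ccontr)
  define N where "N = all_terminal_nbrs V E T"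
  have finite_N: "finite N" unfolding N_def all_terminal_nbrs_def using finite(1) by simp
  assume "\<not> ?thesis"
  then have below: "LP V E T < ereal (real (card N) / 2)" unfolding N_def by simp
  define r where "r = Min (insert (ereal (real (card N) / 2)) (LP_fix0 V E T ` N))"
  have "LP V E T < r"
    unfolding r_def using finite_N below rigid by (auto simp: N_def all_terminal_nbrs_def)
  then obtain d where d: "lp_feasible V E T d" "ereal (\<Sum>v\<in>V - T. d v) < r"
    unfolding LP_def by (auto simp: INF_less_iff)
  interpret lp_solution V E T d using finite nonadj d(1) by unfold_locales
  obtain d' where d': "lp_feasible V E T d'" "(\<Sum>v\<in>V - T. d' v) \<le> (\<Sum>v\<in>V - T. d v)"
    "\<And>v. d' v = 0 \<or> d' v = 1/2 \<or> d' v = 1"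
    using half_integral_rounding[OF T2] by blast
  have cheap: "ereal (\<Sum>v\<in>V - T. d' v) < r"
    using d'(2) d(2) by (metis ereal_less_eq(3) le_less_trans)
  have "\<exists>w\<in>N. d' w = 0"
  proof (rule ccontr)
    assume "\<not> (\<exists>w\<in>N. d' w = 0)"
    then have "(\<Sum>w\<in>N. 1/2) \<le> (\<Sum>w\<in>N. d' w)" using d'(3) by (intro sum_mono) force
    also have "\<dots> \<le> (\<Sum>v\<in>V - T. d' v)"
      using finite(1) d'(1) by (intro sum_mono2) (auto simp: N_def all_terminal_nbrs_def lp_feasible_def)
    finally have "ereal (real (card N) / 2) \<le> ereal (\<Sum>v\<in>V - T. d' v)" by simp
    moreover have "r \<le> ereal (real (card N) / 2)" unfolding r_def using finite_N by simp
    ultimately have "r \<le> ereal (\<Sum>v\<in>V - T. d' v)" by (meson order.trans)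
    then show False using cheap by simp
  qed
  then obtain w where w: "w \<in> N" "d' w = 0" by blast
  have "LP_fix0 V E T w \<le> ereal (\<Sum>v\<in>V - T. d' v)" by (rule LP_fix0_le_cost[OF d'(1) w(2)])
  also have "\<dots> < r" by (rule cheap)
  also have "r \<le> LP_fix0 V E T w" unfolding r_def using finite_N w(1) by simp
  finally show False by simp
qed

lemma budget_from_ratio:
  fixes s M :: nat and k :: int
  assumes s: "2 \<le> s" and ratio: "(real s - 2) / (real s - 1) * real_of_int k \<le> real_of_int (k - int M)"
  shows "int ((s - 1) * M) \<le> k"
proof -
  have pos: "0 < real s - 1" using s by simp
  then have "(real s - 2) * real_of_int k \<le> (real_of_int k - real M) * (real s - 1)"
    using ratio by (simp add: field_simps)
  then have "(real s - 1) * real M \<le> real_of_int k" by (simp add: algebra_simps)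
  moreover have "real (s - 1) = real s - 1" using s by simp
  ultimately have "real ((s - 1) * M) \<le> real_of_int k" by simp
  then show ?thesis by linarith
qed

theorem mainTheorem6:
  fixes V :: "'a set" and E :: "'a set set" and T :: "'a set" and k :: int
  assumes graph: "simple_graph V E"
    and TV: "T \<subseteq> V"
    and s2: "card T \<ge> 2"
    and R1a: "\<forall>t\<in>T. \<forall>t'\<in>T. \<not> adj E t t'"
    and R1b: "p_param V E T k \<ge> 0"
    and R2: "\<forall>v\<in>V - T. \<forall>t\<in>T. \<forall>t'\<in>T. t \<noteq> t' \<longrightarrow> \<not> (adj E v t \<and> adj E v t')"
    and R3: "\<forall>t\<in>T. \<forall>w\<in>V - T. adj E t w \<longrightarrow> LP_fix0 V E T w > LP V E T"
    and cond: "real_of_int (q_param V E T k) \<ge> (real (card T) - 2) / (real (card T) - 1) * real_of_int k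
               \<or> ereal (real_of_int (q_param V E T k)) \<le> 2 * p_param V E T k"
  shows "yes_instance V E T k"
proof -
  have finite_V: "finite V" using graph by (simp add: simple_graph_def)
  have finite_T: "finite T" "T \<noteq> {}" using finite_subset[OF TV finite_V] s2 by auto
  define M where "M = Max (m_param V E T ` T)"
  have "M \<in> m_param V E T ` T" unfolding M_def using finite_T by (intro Max_in) auto
  then obtain t0 where t0: "t0 \<in> T" "m_param V E T t0 = M" by (metis imageE)
  have bounded: "\<forall>t\<in>T. m_param V E T t \<le> M" unfolding M_def using finite_T by simp
  have q: "q_param V E T k = k - int M" unfolding q_param_def M_def ..
  from cond show ?thesis
  proof
    assume "real_of_int (q_param V E T k) \<ge> (real (card T) - 2) / (real (card T) - 1) * real_of_int k"
    then have "int ((card T - 1) * M) \<le> k" using budget_from_ratio[OF s2] q by simp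
    then show ?thesis by (rule yes_by_separating_cuts[OF finite_V TV R1a t0(1) bounded])
  next
    assume small_q: "ereal (real_of_int (q_param V E T k)) \<le> 2 * p_param V E T k"
    obtain L where L: "LP V E T = ereal L"
      using LP_nonneg[of V E T] R1b unfolding p_param_def by (cases "LP V E T") auto
    have "real (card (all_terminal_nbrs V E T)) / 2 \<le> L"
      using LP_ge_half_neighbours[OF finite_V TV s2 R1a R3] L by simp
    moreover have "real_of_int k - real M \<le> 2 * (real_of_int k - L)"
      using small_q q L unfolding p_param_def by simp
    ultimately have "real_of_int (int (card (all_terminal_nbrs V E T)) - int M) \<le> real_of_int k"
      by simp
    then have "int (card (all_terminal_nbrs V E T)) - int (m_param V E T t0) \<le> k"
      using t0(2) of_int_le_iff by blast
    then show ?thesis by (rule yes_by_neighbourhoods[OF finite_V R1a R2 t0(1)])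
  qed
qed

end
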